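(* Let $P,Q$ be mutually absolutely continuous probability measures, let $E$ be measurable, $q:=Q(E)$, and $r:=\chi^2(Q\Vert P)$. Then $$P(E)\le\frac{r+2q+\sqrt{r^2+4r\,q(1-q)}}{2(1+r)}.$$
   Context: $\chi^2(Q\Vert P):=\int\big(\tfrac{\mathrm dQ}{\mathrm dP}\big)^2\mathrm dP-1$; equivalently it is the $f$-divergence $D_f(P\Vert Q)=\int f(\mathrm dP/\mathrm dQ)\,\mathrm dQ$ with $f(t)=1/t-1$. *)

theory Defs
  imports "HOL-Probability.Probability"
begin

definition chi2 :: "'a measure \<Rightarrow> 'a measure \<Rightarrow> ennreal" where
  "chi2 Q P = (\<integral>\<^sup>+ x. (RN_deriv P Q x)\<^sup>2 \<partial>P) - 1"

end

theory Submission
  imports Defs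
begin

text \<open>Write \<open>f = dQ/dP\<close>, \<open>p = P(E)\<close> and \<open>q = Q(E)\<close>. Cauchy-Schwarz on \<open>E\<close> and on its
  complement gives \<open>q\<^sup>2 \<le> p \<integral>\<^sub>E f\<^sup>2 dP\<close> and \<open>(1 - q)\<^sup>2 \<le> (1 - p) \<integral>\<^bsub>E\<^sup>c\<^esub> f\<^sup>2 dP\<close>, so the
  chi-squared divergence of the two-point distributions \<open>(p, 1 - p)\<close> and \<open>(q, 1 - q)\<close>, which is
  \<open>(q - p)\<^sup>2 / (p (1 - p))\<close>, is at most \<open>r = \<chi>\<^sup>2(Q\<parallel>P)\<close>. The claimed bound is the larger root of
  the quadratic \<open>(q - p)\<^sup>2 = r p (1 - p)\<close> in \<open>p\<close>.\<close>

lemma emeasure_density_sq_le: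
  assumes [measurable]: "f \<in> borel_measurable M" "A \<in> sets M"
  shows "(emeasure (density M f) A)\<^sup>2 \<le> emeasure M A * (\<integral>\<^sup>+x\<in>A. (f x)\<^sup>2 \<partial>M)"
proof -
  have "\<And>x. f x * indicator A x * indicator A x = f x * indicator A x"
    "\<And>x. (f x * indicator A x)\<^sup>2 = (f x)\<^sup>2 * indicator A x"
    "\<And>x. (indicator A x :: ennreal)\<^sup>2 = indicator A x"
    by (simp_all split: split_indicator)
  moreover have "(\<integral>\<^sup>+x. f x * indicator A x * indicator A x \<partial>M)\<^sup>2
      \<le> (\<integral>\<^sup>+x. (f x * indicator A x)\<^sup>2 \<partial>M) * (\<integral>\<^sup>+x. (indicator A x)\<^sup>2 \<partial>M)"
    by (rule Cauchy_Schwarz_nn_integral) auto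
  ultimately show ?thesis
    by (simp add: emeasure_density mult.commute)
qed

lemma (in finite_measure) measure_density_sq_le:
  assumes [measurable]: "f \<in> borel_measurable M" "A \<in> sets M"
    and finite: "(\<integral>\<^sup>+x\<in>A. (f x)\<^sup>2 \<partial>M) \<noteq> \<infinity>"
  shows "(measure (density M f) A)\<^sup>2 \<le> measure M A * enn2real (\<integral>\<^sup>+x\<in>A. (f x)\<^sup>2 \<partial>M)"
proof -
  have "enn2real ((emeasure (density M f) A)\<^sup>2)
      \<le> enn2real (emeasure M A * (\<integral>\<^sup>+x\<in>A. (f x)\<^sup>2 \<partial>M))"
    using emeasure_density_sq_le[of f M A] emeasure_finite[of A] finite
    by (intro enn2real_mono) (auto simp: ennreal_mult_eq_top_iff less_top[symmetric])
  then show ?thesis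
    by (simp add: measure_def enn2real_mult power2_eq_square)
qed

lemma sq_diff_le_of_split_bounds:
  fixes p q a b r :: real
  assumes "0 \<le> p" "p \<le> 1"
    and "q\<^sup>2 \<le> p * a" "(1 - q)\<^sup>2 \<le> (1 - p) * b" and "a + b \<le> 1 + r"
  shows "(q - p)\<^sup>2 \<le> r * p * (1 - p)"
proof -
  have "q\<^sup>2 * (1 - p) + (1 - q)\<^sup>2 * p \<le> p * (1 - p) * (a + b)"
    using mult_right_mono[OF assms(3), of "1 - p"] mult_right_mono[OF assms(4) assms(1)] assms(2)
    by (simp add: algebra_simps)
  also have "\<dots> \<le> p * (1 - p) * (1 + r)"
    using assms by (intro mult_left_mono) auto
  finally show ?thesis
    by (simp add: power2_eq_square algebra_simps)
qed

lemma le_upper_root_if_sq_diff_le: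
  fixes p q r :: real
  assumes "0 \<le> r" and "(q - p)\<^sup>2 \<le> r * p * (1 - p)"
  shows "p \<le> (r + 2 * q + sqrt (r\<^sup>2 + 4 * r * q * (1 - q))) / (2 * (1 + r))"
proof -
  have "(2 * (1 + r) * p - (r + 2 * q))\<^sup>2 - (r\<^sup>2 + 4 * r * q * (1 - q))
      = 4 * (1 + r) * ((q - p)\<^sup>2 - r * p * (1 - p))"
    by (simp add: power2_eq_square algebra_simps)
  also have "\<dots> \<le> 0"
    using assms by (intro mult_nonneg_nonpos) auto
  finally have "2 * (1 + r) * p - (r + 2 * q) \<le> sqrt (r\<^sup>2 + 4 * r * q * (1 - q))"
    by (intro real_le_rsqrt) simp
  then show ?thesis
    using assms(1) by (simp add: field_simps)
qed

lemma sq_measure_diff_le_chi2: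
  assumes "prob_space P" "prob_space Q" "sets P = sets Q" "absolutely_continuous P Q"
    and [measurable]: "E \<in> sets P" and "chi2 Q P \<noteq> \<infinity>"
  shows "(measure Q E - measure P E)\<^sup>2 \<le> enn2real (chi2 Q P) * measure P E * (1 - measure P E)"
proof -
  interpret P: prob_space P by fact
  interpret Q: prob_space Q by fact
  define f where "f = RN_deriv P Q"
  define E' where "E' = space P - E"
  have [measurable]: "f \<in> borel_measurable P" "E' \<in> sets P"
    by (auto simp: f_def E'_def)
  have Q_eq: "Q = density P f"
    unfolding f_def using assms(3,4) P.density_RN_deriv by simp
  have "(\<integral>\<^sup>+x. (f x)\<^sup>2 \<partial>P) = (\<integral>\<^sup>+x\<in>E \<union> E'. (f x)\<^sup>2 \<partial>P)"
    by (intro nn_integral_cong) (auto simp: E'_def indicator_def)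
  also have "\<dots> = (\<integral>\<^sup>+x\<in>E. (f x)\<^sup>2 \<partial>P) + (\<integral>\<^sup>+x\<in>E'. (f x)\<^sup>2 \<partial>P)"
    by (intro nn_integral_disjoint_pair) (auto simp: E'_def)
  finally have split:
    "(\<integral>\<^sup>+x. (f x)\<^sup>2 \<partial>P) = (\<integral>\<^sup>+x\<in>E. (f x)\<^sup>2 \<partial>P) + (\<integral>\<^sup>+x\<in>E'. (f x)\<^sup>2 \<partial>P)" .
  have chi2_eq: "chi2 Q P = (\<integral>\<^sup>+x. (f x)\<^sup>2 \<partial>P) - 1"
    unfolding chi2_def f_def ..
  then have finite: "(\<integral>\<^sup>+x\<in>E. (f x)\<^sup>2 \<partial>P) \<noteq> \<infinity>" "(\<integral>\<^sup>+x\<in>E'. (f x)\<^sup>2 \<partial>P) \<noteq> \<infinity>"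
    using assms(6) split by auto
  \<comment> \<open>Truncated subtraction makes \<open>chi2 Q P\<close> only an upper bound for \<open>\<integral> f\<^sup>2 dP - 1\<close>, which suffices.\<close>
  have "enn2real (\<integral>\<^sup>+x. (f x)\<^sup>2 \<partial>P) \<le> enn2real (chi2 Q P + 1)"
    using assms(6) unfolding chi2_eq
    by (intro enn2real_mono) (auto simp: diff_add_self_ennreal top.not_eq_extremum)
  then have sum_le: "enn2real (\<integral>\<^sup>+x\<in>E. (f x)\<^sup>2 \<partial>P) + enn2real (\<integral>\<^sup>+x\<in>E'. (f x)\<^sup>2 \<partial>P)
      \<le> 1 + enn2real (chi2 Q P)"
    using finite assms(6) unfolding split
    by (simp add: enn2real_plus top.not_eq_extremum)
  have "space Q = space P"
    using sets_eq_imp_space_eq[OF assms(3)] by simp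
  then have "measure Q E' = 1 - measure Q E" "measure P E' = 1 - measure P E"
    using Q.prob_compl[of E] P.prob_compl[of E] assms(3,5) by (simp_all add: E'_def)
  then show ?thesis
    using P.measure_density_sq_le[of f E] P.measure_density_sq_le[of f E'] finite sum_le
    by (intro sq_diff_le_of_split_bounds) (auto simp: Q_eq[symmetric])
qed

theorem mainTheorem18:
  fixes P Q :: "'a measure" and E :: "'a set"
  assumes "prob_space P" and "prob_space Q" and "sets P = sets Q"
    and "absolutely_continuous P Q" and "absolutely_continuous Q P"
    and "E \<in> sets P"
    and "chi2 Q P \<noteq> \<infinity>"
  shows "let q = measure Q E; r = enn2real (chi2 Q P) in
         measure P E \<le> (r + 2 * q + sqrt (r\<^sup>2 + 4 * r * q * (1 - q))) / (2 * (1 + r))"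
  using le_upper_root_if_sq_diff_le[OF enn2real_nonneg
      sq_measure_diff_le_chi2[OF assms(1-4,6,7)]]
  by (simp add: Let_def)

end
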